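(* Let $\epsilon$ be a sequence to which Algorithm A (described below) is applied and let $\epsilon'$ be the output. Then for every position $i$, $\epsilon'_i\neq\epsilon_i$ if and only if $i-2$ is an original occurrence of $p$, a transient occurrence of $p$, or an original occurrence of $q$.
   Context: The reduction of an integer word replaces each occurrence of its $k$-th smallest distinct value by $k-1$; a consecutive pattern $\underline{p_1p_2p_3p_4}$ occurs in a sequence at position $i$ if the reduction of its entries in positions $i,\dots,i+3$ equals $p_1p_2p_3p_4$. Let $p=\underline{0102}$ and $q=\underline{0112}$. Algorithm A, on input an integer sequence $\mathrm{seq}=\epsilon_1\cdots\epsilon_n$: let $E_p$, $E_q$ be the sets of positions of occurrences of $p$, resp. $q$, in the input sequence; set $\mathrm{last}:=$ null. For $i=1,2,\dots,n$ in order: let $N_p,N_q$ be the sets of positions of occurrences of $p$, resp. $q$, in the current sequence. If $i-2\in E_p$: set $\mathrm{last}:=\mathrm{seq}[i]$ and $\mathrm{seq}[i]:=\mathrm{seq}[i-1]$. Else if $i-2\in E_q$: set $\mathrm{last}:=\mathrm{seq}[i]$ and $\mathrm{seq}[i]:=\mathrm{seq}[i-2]$. Else if $i-2\in N_p$ or $i-2\in N_q$: swap the values of $\mathrm{seq}[i]$ and $\mathrm{last}$. Output $\mathrm{seq}$. With $\epsilon$ the input and $\epsilon'$ the output: position $i$ is an original occurrence of $p$ if $\epsilon_i=\epsilon_{i+2}$ and $\epsilon_i<\epsilon_{i+1}<\epsilon_{i+3}$; an original occurrence of $q$ if $\epsilon_i<\epsilon_{i+1}=\epsilon_{i+2}<\epsilon_{i+3}$;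 a transient occurrence of $p$ if it is not an original occurrence of $p$ but $\epsilon'_i=\epsilon_{i+2}$ and $\epsilon'_i<\epsilon_{i+1}<\epsilon_{i+3}$. *)

theory Defs
  imports Main
begin

definition pos :: "int list \<Rightarrow> nat \<Rightarrow> int" where
  "pos xs j = xs ! (j - 1)"

definition red :: "int list \<Rightarrow> nat list" where
  "red w = map (\<lambda>x. card {y \<in> set w. y < x}) w"

definition occurs4 :: "nat list \<Rightarrow> int list \<Rightarrow> nat \<Rightarrow> bool" where
  "occurs4 pat xs j \<longleftrightarrow> 1 \<le> j \<and> j + 3 \<le> length xs \<and> red (take 4 (drop (j - 1) xs)) = pat"

abbreviation patP :: "nat list" where "patP \<equiv> [0,1,0,2]"
abbreviation patQ :: "nat list" where "patQ \<equiv> [0,1,1,2]"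

text \<open>One iteration (index i) of Algorithm A; eps is the original input,
  the state is (current sequence, last), with last = None meaning null.\<close>
definition stepA :: "int list \<Rightarrow> nat \<Rightarrow> int list \<times> int option \<Rightarrow> int list \<times> int option" where
  "stepA eps i st = (let s = fst st; lst = snd st in
     if occurs4 patP eps (i - 2) then (s[i - 1 := pos s (i - 1)], Some (pos s i))
     else if occurs4 patQ eps (i - 2) then (s[i - 1 := pos s (i - 2)], Some (pos s i))
     else if occurs4 patP s (i - 2) \<or> occurs4 patQ s (i - 2)
       then (s[i - 1 := the lst], Some (pos s i))
     else (s, lst))"

definition algA :: "int list \<Rightarrow> int list" where
  "algA eps = fst (fold (stepA eps) [1..<length eps + 1] (eps, None))"

definition orig_p :: "int list \<Rightarrow> nat \<Rightarrow> bool" where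
  "orig_p e j \<longleftrightarrow> 1 \<le> j \<and> j + 3 \<le> length e \<and>
     pos e j = pos e (j + 2) \<and> pos e j < pos e (j + 1) \<and> pos e (j + 1) < pos e (j + 3)"

definition orig_q :: "int list \<Rightarrow> nat \<Rightarrow> bool" where
  "orig_q e j \<longleftrightarrow> 1 \<le> j \<and> j + 3 \<le> length e \<and>
     pos e j < pos e (j + 1) \<and> pos e (j + 1) = pos e (j + 2) \<and> pos e (j + 2) < pos e (j + 3)"

definition trans_p :: "int list \<Rightarrow> int list \<Rightarrow> nat \<Rightarrow> bool" where
  "trans_p e e' j \<longleftrightarrow> 1 \<le> j \<and> j + 3 \<le> length e \<and> \<not> orig_p e j \<and>
     pos e' j = pos e (j + 2) \<and> pos e' j < pos e (j + 1) \<and> pos e (j + 1) < pos e (j + 3)"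

end

theory Submission
  imports Defs
begin

(*
  Iteration i of Algorithm A sees a word whose first i - 1 entries are already final and whose
  remaining entries are still original; it rewrites position i exactly when an original occurrence
  of p or q, or an occurrence of p or q in this mixed word, starts at i - 2 (we say that iteration i
  fires). A joint induction shows two invariants. First, a mixed occurrence at j that is not
  original is always an occurrence of p, iteration j fires, iteration j + 1 does not, and so the
  variable last holds eps_j when iteration j + 2 reads it. Second, every ascent
  eps_i < eps_(i+1) survives as eps'_i < eps_(i+1). Consequently every firing really changes the
  entry (in the mixed case eps'_(j+2) = eps_j differs from eps_(j+2) = eps'_j, because iteration
  j fired), and the non-original mixed occurrences are exactly the transient occurrences of p.
*)

lemma card_less_elems_less_iff:
  fixes x z :: "'a :: linorder"
  assumes "finite A" "x \<in> A" "z \<in> A"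
  shows "card {y \<in> A. y < x} < card {y \<in> A. y < z} \<longleftrightarrow> x < z"
proof
  assume "x < z"
  have "{y \<in> A. y < x} \<subset> {y \<in> A. y < z}"
    using \<open>x < z\<close> \<open>x \<in> A\<close> by auto
  then show "card {y \<in> A. y < x} < card {y \<in> A. y < z}"
    using \<open>finite A\<close> by (simp add: psubset_card_mono)
next
  assume "card {y \<in> A. y < x} < card {y \<in> A. y < z}"
  moreover have "card {y \<in> A. y < z} \<le> card {y \<in> A. y < x}" if "z \<le> x"
    using that \<open>finite A\<close> by (intro card_mono) auto
  ultimately show "x < z" by (meson not_le)
qed

lemma red_nth_less_iff:
  assumes "i < length w" "k < length w"
  shows "red w ! i < red w ! k \<longleftrightarrow> w ! i < w ! k"
  using assms by (simp add: red_def card_less_elems_less_iff)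

lemma red_four: "red [a, b, c, d] =
  map (\<lambda>x. card {y \<in> {a, b, c, d}. y < x}) [a, b, c, d]"
  by (simp only: red_def list.set)

lemma red_eq_0102_iff: "red [a, b, c, d] = [0, 1, 0, 2] \<longleftrightarrow> a = c \<and> a < b \<and> b < d"
proof
  assume red: "red [a, b, c, d] = [0, 1, 0, 2]"
  have "a < b" using red_nth_less_iff[of 0 "[a, b, c, d]" 1] red by simp
  moreover have "b < d" using red_nth_less_iff[of 1 "[a, b, c, d]" 3] red by simp
  moreover have "\<not> a < c" "\<not> c < a"
    using red_nth_less_iff[of 0 "[a, b, c, d]" 2] red_nth_less_iff[of 2 "[a, b, c, d]" 0] red
    by simp_all
  ultimately show "a = c \<and> a < b \<and> b < d" by simp
next
  assume order: "a = c \<and> a < b \<and> b < d"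
  then have "{y \<in> {a, b, c, d}. y < a} = {}" "{y \<in> {a, b, c, d}. y < b} = {a}"
    "{y \<in> {a, b, c, d}. y < c} = {}" "{y \<in> {a, b, c, d}. y < d} = {a, b}"
    by auto
  with order show "red [a, b, c, d] = [0, 1, 0, 2]"
    unfolding red_four by simp
qed

lemma red_eq_0112_iff: "red [a, b, c, d] = [0, 1, 1, 2] \<longleftrightarrow> a < b \<and> b = c \<and> c < d"
proof
  assume red: "red [a, b, c, d] = [0, 1, 1, 2]"
  have "a < b" using red_nth_less_iff[of 0 "[a, b, c, d]" 1] red by simp
  moreover have "c < d" using red_nth_less_iff[of 2 "[a, b, c, d]" 3] red by simp
  moreover have "\<not> b < c" "\<not> c < b"
    using red_nth_less_iff[of 1 "[a, b, c, d]" 2] red_nth_less_iff[of 2 "[a, b, c, d]" 1] red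
    by simp_all
  ultimately show "a < b \<and> b = c \<and> c < d" by simp
next
  assume order: "a < b \<and> b = c \<and> c < d"
  then have "{y \<in> {a, b, c, d}. y < a} = {}" "{y \<in> {a, b, c, d}. y < b} = {a}"
    "{y \<in> {a, b, c, d}. y < c} = {a}" "{y \<in> {a, b, c, d}. y < d} = {a, b}"
    by auto
  with order show "red [a, b, c, d] = [0, 1, 1, 2]"
    unfolding red_four by simp
qed

lemma take_four_drop_eq_pos:
  assumes "1 \<le> j" "j + 3 \<le> length xs"
  shows "take 4 (drop (j - 1) xs) = [pos xs j, pos xs (j + 1), pos xs (j + 2), pos xs (j + 3)]"
  using assms by (intro nth_equalityI) (auto simp: pos_def numeral_eq_Suc less_Suc_eq)

lemma occurs4_patP_iff_orig_p: "occurs4 patP xs j \<longleftrightarrow> orig_p xs j"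
  unfolding occurs4_def orig_p_def using take_four_drop_eq_pos[of j xs] red_eq_0102_iff by auto

lemma occurs4_patQ_iff_orig_q: "occurs4 patQ xs j \<longleftrightarrow> orig_q xs j"
  unfolding occurs4_def orig_q_def using take_four_drop_eq_pos[of j xs] red_eq_0112_iff by auto

definition runA :: "int list \<Rightarrow> nat \<Rightarrow> int list \<times> int option" where
  "runA e k = fold (stepA e) [1..<k + 1] (e, None)"

abbreviation lastA :: "int list \<Rightarrow> nat \<Rightarrow> int option" where
  "lastA e k \<equiv> snd (runA e k)"

abbreviation out :: "int list \<Rightarrow> nat \<Rightarrow> int" where
  "out e j \<equiv> pos (algA e) j"

lemma runA_Suc: "runA e (Suc k) = stepA e (Suc k) (runA e k)"
  by (simp add: runA_def)

lemma algA_eq_runA: "algA e = fst (runA e (length e))"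
  by (simp add: algA_def runA_def)

lemma stepA_updates_one: "\<exists>v. fst (stepA e i st) = (fst st)[i - 1 := v]"
  unfolding stepA_def Let_def by (auto intro: exI[of _ "fst st ! (i - 1)"])

lemma length_runA: "length (fst (runA e k)) = length e"
proof (induction k)
  case (Suc k)
  then show ?case
    using stepA_updates_one[of e "Suc k" "runA e k"] by (auto simp: runA_Suc)
qed (simp add: runA_def)

lemma length_algA: "length (algA e) = length e"
  by (simp add: algA_eq_runA length_runA)

lemma drop_runA: "drop k (fst (runA e k)) = drop k e"
proof (induction k)
  case (Suc k)
  obtain v where "fst (runA e (Suc k)) = (fst (runA e k))[k := v]"
    using stepA_updates_one[of e "Suc k" "runA e k"] by (auto simp: runA_Suc)
  then have "drop (Suc k) (fst (runA e (Suc k))) = drop 1 (drop k (fst (runA e k)))"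
    by simp
  with Suc.IH show ?case by simp
qed (simp add: runA_def)

lemma take_runA:
  assumes "k \<le> k'"
  shows "take k (fst (runA e k')) = take k (fst (runA e k))"
  using assms
proof (induction k' rule: dec_induct)
  case (step m)
  obtain v where "fst (runA e (Suc m)) = (fst (runA e m))[m := v]"
    using stepA_updates_one[of e "Suc m" "runA e m"] by (auto simp: runA_Suc)
  then have "take k (fst (runA e (Suc m))) = take k (fst (runA e m))"
    using step.hyps by (simp only: take_update_cancel)
  from this step.IH show ?case by (rule trans)
qed simp

lemma runA_eq_take_algA_drop:
  assumes "k \<le> length e"
  shows "fst (runA e k) = take k (algA e) @ drop k e"
proof -
  have "fst (runA e k) = take k (fst (runA e k)) @ drop k (fst (runA e k))"
    by simp
  also have "\<dots> = take k (algA e) @ drop k e"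
    by (simp only: algA_eq_runA take_runA[OF assms] drop_runA)
  finally show ?thesis .
qed

lemma pos_take_append_drop:
  assumes "length xs = length ys" "1 \<le> j" "k \<le> length xs"
  shows "pos (take k xs @ drop k ys) j = (if j \<le> k then pos xs j else pos ys j)"
  using assms by (auto simp: pos_def nth_append)

text \<open>Occurrences of p and q at j in the word seen by iteration j + 2, whose first j + 1 entries
  are already final (see runA_eq_take_algA_drop).\<close>

definition cur_p :: "int list \<Rightarrow> nat \<Rightarrow> bool" where
  "cur_p e j \<longleftrightarrow> 1 \<le> j \<and> j + 3 \<le> length e \<and>
     out e j = pos e (j + 2) \<and> out e j < out e (j + 1) \<and> out e (j + 1) < pos e (j + 3)"

definition cur_q :: "int list \<Rightarrow> nat \<Rightarrow> bool" where
  "cur_q e j \<longleftrightarrow> 1 \<le> j \<and> j + 3 \<le> length e \<and>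
     out e j < out e (j + 1) \<and> out e (j + 1) = pos e (j + 2) \<and> pos e (j + 2) < pos e (j + 3)"

definition fires :: "int list \<Rightarrow> nat \<Rightarrow> bool" where
  "fires e i \<longleftrightarrow> orig_p e (i - 2) \<or> orig_q e (i - 2) \<or> cur_p e (i - 2) \<or> cur_q e (i - 2)"

lemma orig_p_mixed_iff_cur_p:
  "orig_p (take (j + 1) (algA e) @ drop (j + 1) e) j \<longleftrightarrow> cur_p e j"
proof (cases "1 \<le> j \<and> j + 3 \<le> length e")
  case True
  then show ?thesis
    by (auto simp: orig_p_def cur_p_def pos_take_append_drop length_algA)
qed (auto simp: orig_p_def cur_p_def length_algA)

lemma orig_q_mixed_iff_cur_q:
  "orig_q (take (j + 1) (algA e) @ drop (j + 1) e) j \<longleftrightarrow> cur_q e j"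
proof (cases "1 \<le> j \<and> j + 3 \<le> length e")
  case True
  then show ?thesis
    by (auto simp: orig_q_def cur_q_def pos_take_append_drop length_algA)
qed (auto simp: orig_q_def cur_q_def length_algA)

lemma orig_p_state_iff_cur_p:
  assumes "i \<le> length e"
  shows "orig_p (fst (runA e (i - 1))) (i - 2) \<longleftrightarrow> cur_p e (i - 2)"
proof (cases "2 \<le> i")
  case True
  then have k: "i - 1 = i - 2 + 1" "i - 2 + 1 \<le> length e"
    using assms by simp_all
  show ?thesis
    unfolding k(1) runA_eq_take_algA_drop[OF k(2)] by (rule orig_p_mixed_iff_cur_p)
qed (simp add: orig_p_def cur_p_def)

lemma orig_q_state_iff_cur_q:
  assumes "i \<le> length e"
  shows "orig_q (fst (runA e (i - 1))) (i - 2) \<longleftrightarrow> cur_q e (i - 2)"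
proof (cases "2 \<le> i")
  case True
  then have k: "i - 1 = i - 2 + 1" "i - 2 + 1 \<le> length e"
    using assms by simp_all
  show ?thesis
    unfolding k(1) runA_eq_take_algA_drop[OF k(2)] by (rule orig_q_mixed_iff_cur_q)
qed (simp add: orig_q_def cur_q_def)

lemma out_lastA_step:
  assumes "1 \<le> i" "i \<le> length e"
  shows "out e i = (if orig_p e (i - 2) then out e (i - 1)
                    else if orig_q e (i - 2) then out e (i - 2)
                    else if cur_p e (i - 2) \<or> cur_q e (i - 2) then the (lastA e (i - 1))
                    else pos e i)"
    and "lastA e i = (if fires e i then Some (pos e i) else lastA e (i - 1))"
proof -
  define s where "s = fst (runA e (i - 1))"
  have run: "runA e i = stepA e i (runA e (i - 1))"
    using runA_Suc[of e "i - 1"] assms(1) by simp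
  have s_mixed: "s = take (i - 1) (algA e) @ drop (i - 1) e"
    unfolding s_def using assms by (simp add: runA_eq_take_algA_drop)
  have s_final: "pos s j = out e j" if "1 \<le> j" "j < i" for j
    using that assms by (auto simp: s_mixed pos_take_append_drop length_algA)
  have s_orig: "pos s i = pos e i"
    using assms by (auto simp: s_mixed pos_take_append_drop length_algA)
  have s_update: "pos (s[i - 1 := v]) i = v" for v
    using assms by (simp add: s_def length_runA pos_def)
  have out_i: "out e i = pos (fst (runA e i)) i"
    using assms by (simp add: runA_eq_take_algA_drop pos_take_append_drop length_algA)
  have "orig_p e (i - 2) \<Longrightarrow> 3 \<le> i" "orig_q e (i - 2) \<Longrightarrow> 3 \<le> i"
    by (auto simp: orig_p_def orig_q_def)
  then show "out e i = (if orig_p e (i - 2) then out e (i - 1)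
                    else if orig_q e (i - 2) then out e (i - 2)
                    else if cur_p e (i - 2) \<or> cur_q e (i - 2) then the (lastA e (i - 1))
                    else pos e i)"
    unfolding out_i run stepA_def Let_def s_def[symmetric]
      occurs4_patP_iff_orig_p occurs4_patQ_iff_orig_q
      orig_p_state_iff_cur_p[OF assms(2), folded s_def] orig_q_state_iff_cur_q[OF assms(2), folded s_def]
    by (auto simp: s_update[simplified] s_final s_orig)
  show "lastA e i = (if fires e i then Some (pos e i) else lastA e (i - 1))"
    unfolding run stepA_def Let_def s_def[symmetric] fires_def
      occurs4_patP_iff_orig_p occurs4_patQ_iff_orig_q
      orig_p_state_iff_cur_p[OF assms(2), folded s_def] orig_q_state_iff_cur_q[OF assms(2), folded s_def]
    by (simp add: s_orig)
qed

lemma firesE: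
  assumes "fires e i"
  obtains j where "i = j + 2" "1 \<le> j" "j + 3 \<le> length e"
  using assms by (intro that[of "i - 2"]) (auto simp: fires_def orig_p_def orig_q_def cur_p_def cur_q_def)

lemma fires_cases:
  assumes "fires e (j + 2)"
  obtains (orig_p) "orig_p e j"
    | (orig_q) "\<not> orig_p e j" "orig_q e j"
    | (cur) "\<not> orig_p e j" "\<not> orig_q e j" "cur_p e j \<or> cur_q e j"
  using assms unfolding fires_def by auto

lemma fires_ascent:
  assumes "fires e i"
  shows "pos e i < pos e (i + 1)"
proof -
  obtain j where "i = j + 2" "1 \<le> j" "j + 3 \<le> length e"
    using assms by (rule firesE)
  with assms show ?thesis
    by (auto simp: fires_def orig_p_def orig_q_def cur_p_def cur_q_def eval_nat_numeral)
qed

lemma out_if_orig_p: "orig_p e j \<Longrightarrow> out e (j + 2) = out e (j + 1)"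
  using out_lastA_step(1)[of "j + 2" e] by (auto simp: orig_p_def)

lemma out_if_orig_q: "\<not> orig_p e j \<Longrightarrow> orig_q e j \<Longrightarrow> out e (j + 2) = out e j"
  using out_lastA_step(1)[of "j + 2" e] by (auto simp: orig_q_def)

lemma out_if_cur:
  "\<not> orig_p e j \<Longrightarrow> \<not> orig_q e j \<Longrightarrow> cur_p e j \<or> cur_q e j \<Longrightarrow>
     out e (j + 2) = the (lastA e (j + 1))"
  using out_lastA_step(1)[of "j + 2" e] by (auto simp: cur_p_def cur_q_def)

lemma out_if_not_fires: "1 \<le> i \<Longrightarrow> i \<le> length e \<Longrightarrow> \<not> fires e i \<Longrightarrow> out e i = pos e i"
  using out_lastA_step(1)[of i e] by (auto simp: fires_def)

lemma out_if_descent: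
  "1 \<le> i \<Longrightarrow> i \<le> length e \<Longrightarrow> pos e (i + 1) \<le> pos e i \<Longrightarrow> out e i = pos e i"
  using out_if_not_fires fires_ascent by fastforce

lemma lastA_if_fires: "fires e i \<Longrightarrow> lastA e i = Some (pos e i)"
  using out_lastA_step(2)[of i e] by (auto elim: firesE)

lemma lastA_if_not_fires:
  "j + 2 \<le> length e \<Longrightarrow> \<not> fires e (j + 2) \<Longrightarrow> lastA e (j + 2) = lastA e (j + 1)"
  using out_lastA_step(2)[of "j + 2" e] by simp

lemma not_fires_before_cur:
  assumes IH_cur: "\<not> orig_p e m \<Longrightarrow> \<not> orig_q e m \<Longrightarrow> cur_p e m \<or> cur_q e m \<Longrightarrow>
      fires e m \<and> \<not> fires e (m + 1) \<and> cur_p e m \<and> lastA e (m + 1) = Some (pos e m)"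
    and IH_less: "1 \<le> m \<Longrightarrow> m + 1 \<le> length e \<Longrightarrow> pos e m < pos e (m + 1) \<Longrightarrow>
      out e m < pos e (m + 1)"
    and cur: "cur_p e (m + 1) \<or> cur_q e (m + 1)"
  shows "\<not> fires e (m + 2)"
proof
  have len: "m + 4 \<le> length e" and ascent: "out e (m + 1) < out e (m + 2)"
    using cur by (auto simp: cur_p_def cur_q_def)
  assume "fires e (m + 2)"
  then show False
  proof (cases rule: fires_cases)
    case orig_p
    then show False using out_if_orig_p ascent by simp
  next
    case orig_q
    then have "out e (m + 2) < pos e (m + 2)"
      using out_if_orig_q IH_less by (force simp: orig_q_def)
    then show False
      using cur ascent orig_q by (auto simp: cur_p_def cur_q_def orig_q_def eval_nat_numeral)
  next
    case cur
    then have "fires e m" "\<not> fires e (m + 1)" "out e (m + 2) = pos e m"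
      using IH_cur out_if_cur by auto
    moreover have "out e (m + 1) = pos e (m + 1)"
      using \<open>\<not> fires e (m + 1)\<close> len by (intro out_if_not_fires) auto
    ultimately show False
      using ascent fires_ascent by force
  qed
qed

lemma cur_occurrence_step:
  assumes IH_cur: "\<not> orig_p e m \<Longrightarrow> \<not> orig_q e m \<Longrightarrow> cur_p e m \<or> cur_q e m \<Longrightarrow>
      fires e m \<and> \<not> fires e (m + 1) \<and> cur_p e m \<and> lastA e (m + 1) = Some (pos e m)"
    and IH_less: "1 \<le> m \<Longrightarrow> m + 1 \<le> length e \<Longrightarrow> pos e m < pos e (m + 1) \<Longrightarrow>
      out e m < pos e (m + 1)"
    and not_orig: "\<not> orig_p e (m + 1)" "\<not> orig_q e (m + 1)"
    and cur: "cur_p e (m + 1) \<or> cur_q e (m + 1)"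
  shows "fires e (m + 1) \<and> \<not> fires e (m + 2) \<and> cur_p e (m + 1) \<and>
    lastA e (m + 2) = Some (pos e (m + 1))"
proof -
  have len: "m + 4 \<le> length e"
    using cur by (auto simp: cur_p_def cur_q_def)
  have not_fires: "\<not> fires e (m + 2)"
    using IH_cur IH_less cur by (rule not_fires_before_cur)
  then have out2: "out e (m + 2) = pos e (m + 2)"
    using len by (intro out_if_not_fires) auto
  have fires: "fires e (m + 1)"
  proof (rule ccontr)
    assume "\<not> fires e (m + 1)"
    then have "out e (m + 1) = pos e (m + 1)"
      using len by (intro out_if_not_fires) auto
    then have "orig_p e (m + 1) \<or> orig_q e (m + 1)"
      using cur out2 by (auto simp: cur_p_def cur_q_def orig_p_def orig_q_def add.assoc)
    then show False using not_orig by blast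
  qed
  have "cur_p e (m + 1)"
  proof (rule ccontr)
    assume "\<not> cur_p e (m + 1)"
    then have "orig_q e (m + 1)"
      using cur out2 fires_ascent[OF fires] by (auto simp: cur_q_def orig_q_def add.assoc)
    then show False using not_orig by blast
  qed
  moreover have "lastA e (m + 2) = Some (pos e (m + 1))"
    using lastA_if_not_fires[OF _ not_fires] lastA_if_fires[OF fires] len by simp
  ultimately show ?thesis using fires not_fires by blast
qed

lemma out_less_step:
  assumes IH_cur: "\<not> orig_p e m \<Longrightarrow> \<not> orig_q e m \<Longrightarrow> cur_p e m \<or> cur_q e m \<Longrightarrow>
      fires e m \<and> \<not> fires e (m + 1) \<and> cur_p e m \<and> lastA e (m + 1) = Some (pos e m)"
    and IH_less: "1 \<le> m \<Longrightarrow> m + 1 \<le> length e \<Longrightarrow> pos e m < pos e (m + 1) \<Longrightarrow>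
      out e m < pos e (m + 1)"
    and len: "m + 3 \<le> length e"
    and ascent: "pos e (m + 2) < pos e (m + 3)"
  shows "out e (m + 2) < pos e (m + 3)"
proof (cases "fires e (m + 2)")
  case False
  then show ?thesis
    using out_if_not_fires[of "m + 2" e] len ascent by simp
next
  case True
  then show ?thesis
  proof (cases rule: fires_cases)
    case orig_p
    then have "out e (m + 1) = pos e (m + 1)"
      by (intro out_if_descent) (auto simp: orig_p_def eval_nat_numeral)
    with orig_p show ?thesis
      using out_if_orig_p by (auto simp: orig_p_def eval_nat_numeral)
  next
    case orig_q
    then have "out e m < pos e (m + 1)"
      using IH_less by (auto simp: orig_q_def)
    with orig_q show ?thesis
      using out_if_orig_q by (auto simp: orig_q_def eval_nat_numeral)
  next
    case cur
    then have "fires e m" "\<not> fires e (m + 1)" "cur_p e m" "out e (m + 2) = pos e m"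
      using IH_cur out_if_cur by auto
    moreover have "out e (m + 1) = pos e (m + 1)"
      using \<open>\<not> fires e (m + 1)\<close> len by (intro out_if_not_fires) auto
    ultimately show ?thesis
      using fires_ascent[of e m] by (auto simp: cur_p_def eval_nat_numeral)
  qed
qed

lemma cur_structure_and_out_less:
  "(\<not> orig_p e n \<longrightarrow> \<not> orig_q e n \<longrightarrow> cur_p e n \<or> cur_q e n \<longrightarrow>
      fires e n \<and> \<not> fires e (n + 1) \<and> cur_p e n \<and> lastA e (n + 1) = Some (pos e n)) \<and>
   (1 \<le> n \<longrightarrow> n + 1 \<le> length e \<longrightarrow> pos e n < pos e (n + 1) \<longrightarrow> out e n < pos e (n + 1))"
proof (induction n rule: less_induct)
  case (less n)
  have "fires e n \<and> \<not> fires e (n + 1) \<and> cur_p e n \<and> lastA e (n + 1) = Some (pos e n)"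
    if "\<not> orig_p e n" "\<not> orig_q e n" "cur_p e n \<or> cur_q e n"
  proof (cases n)
    case 0
    then show ?thesis using that(3) by (simp add: cur_p_def cur_q_def)
  next
    case (Suc m)
    then have "m < n" by simp
    note IH = less.IH[OF this, THEN conjunct1, rule_format] less.IH[OF this, THEN conjunct2, rule_format]
    show ?thesis
      using cur_occurrence_step[OF IH] that Suc by simp
  qed
  moreover have "out e n < pos e (n + 1)"
    if "1 \<le> n" "n + 1 \<le> length e" "pos e n < pos e (n + 1)"
  proof (cases "2 \<le> n")
    case True
    then obtain m where n: "n = m + 2"
      by (metis le_add_diff_inverse2)
    then have "m < n" by simp
    note IH = less.IH[OF this, THEN conjunct1, rule_format] less.IH[OF this, THEN conjunct2, rule_format]
    show ?thesis
      using out_less_step[OF IH] that n by (simp add: eval_nat_numeral)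
  next
    case False
    then have "\<not> fires e n"
      by (auto elim: firesE)
    then show ?thesis
      using out_if_not_fires that by simp
  qed
  ultimately show ?case by blast
qed

lemma cur_occurrence_structure:
  "\<not> orig_p e j \<Longrightarrow> \<not> orig_q e j \<Longrightarrow> cur_p e j \<or> cur_q e j \<Longrightarrow>
     fires e j \<and> \<not> fires e (j + 1) \<and> cur_p e j \<and> lastA e (j + 1) = Some (pos e j)"
  using cur_structure_and_out_less[of e j] by blast

lemma out_less_if_ascent:
  "1 \<le> i \<Longrightarrow> i + 1 \<le> length e \<Longrightarrow> pos e i < pos e (i + 1) \<Longrightarrow> out e i < pos e (i + 1)"
  using cur_structure_and_out_less[of e i] by blast

lemma out_ne_if_fires: "fires e i \<Longrightarrow> out e i \<noteq> pos e i"
proof (induction i rule: less_induct)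
  case (less i)
  obtain j where i: "i = j + 2" "1 \<le> j" "j + 3 \<le> length e"
    using less.prems by (rule firesE)
  from less.prems have "fires e (j + 2)"
    by (simp add: i(1))
  then have "out e (j + 2) \<noteq> pos e (j + 2)"
  proof (cases rule: fires_cases)
    case orig_p
    then have "out e (j + 1) = pos e (j + 1)"
      by (intro out_if_descent) (auto simp: orig_p_def eval_nat_numeral)
    with orig_p show ?thesis
      using out_if_orig_p by (auto simp: orig_p_def eval_nat_numeral)
  next
    case orig_q
    then have "out e j < pos e (j + 1)"
      by (intro out_less_if_ascent) (auto simp: orig_q_def)
    with orig_q show ?thesis
      using out_if_orig_q by (auto simp: orig_q_def eval_nat_numeral)
  next
    case cur
    then have "fires e j" "cur_p e j" "out e (j + 2) = pos e j"
      using cur_occurrence_structure out_if_cur by auto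
    moreover have "out e j \<noteq> pos e j"
      using less.IH \<open>fires e j\<close> i by simp
    ultimately show ?thesis
      by (auto simp: cur_p_def)
  qed
  then show ?case
    by (simp add: i(1))
qed

lemma trans_p_iff_cur:
  "trans_p e (algA e) j \<longleftrightarrow> \<not> orig_p e j \<and> \<not> orig_q e j \<and> (cur_p e j \<or> cur_q e j)"
proof
  assume trans: "trans_p e (algA e) j"
  then have "out e (j + 1) = pos e (j + 1)"
    by (intro out_if_descent) (auto simp: trans_p_def)
  with trans show "\<not> orig_p e j \<and> \<not> orig_q e j \<and> (cur_p e j \<or> cur_q e j)"
    by (auto simp: trans_p_def orig_q_def cur_p_def)
next
  assume cur: "\<not> orig_p e j \<and> \<not> orig_q e j \<and> (cur_p e j \<or> cur_q e j)"
  then have "\<not> fires e (j + 1)" "cur_p e j"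
    using cur_occurrence_structure by auto
  moreover from this have "out e (j + 1) = pos e (j + 1)"
    by (intro out_if_not_fires) (auto simp: cur_p_def)
  ultimately show "trans_p e (algA e) j"
    using cur by (auto simp: trans_p_def cur_p_def)
qed

lemma fires_iff: "fires e i \<longleftrightarrow> orig_p e (i - 2) \<or> trans_p e (algA e) (i - 2) \<or> orig_q e (i - 2)"
  unfolding fires_def trans_p_iff_cur by blast

theorem lemma6:
  fixes eps :: "int list" and i :: nat
  assumes "1 \<le> i" and "i \<le> length eps"
  shows "pos (algA eps) i \<noteq> pos eps i \<longleftrightarrow>
           (orig_p eps (i - 2) \<or> trans_p eps (algA eps) (i - 2) \<or> orig_q eps (i - 2))"
proof -
  have "pos (algA eps) i \<noteq> pos eps i \<longleftrightarrow> fires eps i"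
    using out_ne_if_fires out_if_not_fires assms by blast
  then show ?thesis
    by (simp only: fires_iff)
qed

end
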